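(* Let $\Theta$ be a set of hypotheses, $q:\Theta\to\mathbb{R}^k$ a feature map, $\hat L$ the training loss and $V$ the validation loss. Suppose there exist a vector $\lambda^*\in\mathbb{R}^k$ and a scalar $\alpha^*>0$ such that \[ \alpha^*V(\theta)=\hat L(\theta)+\lambda^*\cdot q(\theta)\quad\text{for all }\theta\in\Theta. \] Let $\theta_1,\dots,\theta_{k+1}\in\Theta$ be such that the $k+1$ vectors $(V(\theta_i),\hat L(\theta_i))\oplus q(\theta_i)\in\mathbb{R}^{k+2}$ are linearly independent, where $\oplus$ denotes concatenation. Let $D=\{(V(\theta_i),\hat L(\theta_i),q(\theta_i)) : 1\le i\le k+1\}$. Then LearnLinReg$(D)$ returns $(\alpha^*,\lambda^* )$.
   Context: Algorithm LearnLinReg takes tuples $(V_i,\hat L_i,q_i)$, $1\le i\le m$, with $q_i\in\mathbb{R}^k$, and proceeds as follows. 1. Sort and reindex the tuples so that $V_1\le\dots\le V_m$. 2. For $i^*=1,2,\dots,m$ in turn, solve the linear program in variables $\alpha\in\mathbb{R}$, $\lambda\in\mathbb{R}^k$, $\Delta_i,f_i\in\mathbb{R}$: - minimize $\sum_{i=1}^m\Delta_i$, - subject to $\alpha\ge0$; $\Delta_i\ge0$, $f_i=\alpha V_i+\Delta_i$, $f_i=\lambda\cdot q_i+\hat L_i$ and $f_{i^*}\le f_i$ for all $i$. If this LP is feasible, return its optimal $(\alpha,\lambda)$. 3. If no LP is feasible, return an error. *)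

theory Defs
  imports "HOL-Analysis.Analysis"
begin

text \<open>A data tuple is (V_i, hat L_i, q_i) with q_i in R^k (k = CARD('k)).
  Lists of tuples are 0-indexed: tuple i is ts ! i for i < length ts.\<close>

type_synonym 'k tuple = "real \<times> real \<times> (real ^ 'k)"

definition tV :: "('k::finite) tuple \<Rightarrow> real" where "tV t = fst t"
definition tL :: "('k::finite) tuple \<Rightarrow> real" where "tL t = fst (snd t)"
definition tq :: "('k::finite) tuple \<Rightarrow> real ^ 'k" where "tq t = snd (snd t)"

definition lp_feasible ::
  "('k::finite) tuple list \<Rightarrow> nat \<Rightarrow> real \<Rightarrow> real ^ 'k \<Rightarrow> (nat \<Rightarrow> real) \<Rightarrow> (nat \<Rightarrow> real) \<Rightarrow> bool" where
  "lp_feasible ts istar \<alpha> lam \<Delta> f \<longleftrightarrow>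
     \<alpha> \<ge> 0 \<and>
     (\<forall>i < length ts.
        \<Delta> i \<ge> 0 \<and>
        f i = \<alpha> * tV (ts ! i) + \<Delta> i \<and>
        f i = lam \<bullet> tq (ts ! i) + tL (ts ! i) \<and>
        f istar \<le> f i)"

definition lp_is_feasible :: "('k::finite) tuple list \<Rightarrow> nat \<Rightarrow> bool" where
  "lp_is_feasible ts istar \<longleftrightarrow> (\<exists>\<alpha> lam \<Delta> f. lp_feasible ts istar \<alpha> lam \<Delta> f)"

definition lp_optimal ::
  "('k::finite) tuple list \<Rightarrow> nat \<Rightarrow> real \<Rightarrow> real ^ 'k \<Rightarrow> (nat \<Rightarrow> real) \<Rightarrow> (nat \<Rightarrow> real) \<Rightarrow> bool" where
  "lp_optimal ts istar \<alpha> lam \<Delta> f \<longleftrightarrow>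
     lp_feasible ts istar \<alpha> lam \<Delta> f \<and>
     (\<forall>\<alpha>' lam' \<Delta>' f'. lp_feasible ts istar \<alpha>' lam' \<Delta>' f' \<longrightarrow>
        (\<Sum>i<length ts. \<Delta> i) \<le> (\<Sum>i<length ts. \<Delta>' i))"

definition sorted_reindexing :: "('k::finite) tuple set \<Rightarrow> ('k::finite) tuple list \<Rightarrow> bool" where
  "sorted_reindexing D ts \<longleftrightarrow> set ts = D \<and> distinct ts \<and> sorted (map tV ts)"

text \<open>LearnLinReg run on the sorted list ts returns (alpha, lambda):
  istar is the first index whose LP is feasible, that LP has an optimal solution,
  and every optimal solution of it has (alpha, lambda) as its (alpha, lambda)-part
  (so the returned value is determined).\<close>
definition learnlinreg_run_returns :: "('k::finite) tuple list \<Rightarrow> real \<Rightarrow> real ^ 'k \<Rightarrow> bool" where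
  "learnlinreg_run_returns ts \<alpha> lam \<longleftrightarrow>
     (\<exists>istar < length ts.
        lp_is_feasible ts istar \<and>
        (\<forall>j < istar. \<not> lp_is_feasible ts j) \<and>
        (\<exists>\<Delta> f. lp_optimal ts istar \<alpha> lam \<Delta> f) \<and>
        (\<forall>\<alpha>' lam' \<Delta>' f'. lp_optimal ts istar \<alpha>' lam' \<Delta>' f' \<longrightarrow> \<alpha>' = \<alpha> \<and> lam' = lam))"

text \<open>LearnLinReg(D) returns (alpha, lambda), whichever sorted reindexing
  (ties in V broken arbitrarily) is used in step 1.\<close>
definition LearnLinReg_returns :: "('k::finite) tuple set \<Rightarrow> real \<Rightarrow> real ^ 'k \<Rightarrow> bool" where
  "LearnLinReg_returns D \<alpha> lam \<longleftrightarrow>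
     (\<forall>ts. sorted_reindexing D ts \<longrightarrow> learnlinreg_run_returns ts \<alpha> lam)"

end

theory Submission
  imports Defs
begin

text \<open>Since the true relation holds exactly on the data, the LP for the smallest validation
  loss is feasible with zero slack, so every optimal solution has zero slack and hence fits all
  data points exactly. Each exact fit \<open>(\<alpha>, \<lambda>)\<close> gives a vector \<open>(\<alpha>, -1, -\<lambda>)\<close> orthogonal
  to the \<open>k + 1\<close> independent data vectors in \<open>\<real>\<^sup>k\<^sup>+\<^sup>2\<close>; their orthogonal complement is a line,
  and the normalisation of the second coordinate pins the vector down.\<close>

definition fits :: "real \<Rightarrow> real ^ 'k \<Rightarrow> ('k::finite) tuple \<Rightarrow> bool" where
  "fits \<alpha> lam x \<longleftrightarrow> \<alpha> * tV x = tL x + lam \<bullet> tq x"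

lemma orthogonal_complement_collinear:
  fixes S :: "'a::euclidean_space set"
  assumes "independent S" and "card S + 1 = DIM('a)"
    and "\<forall>x\<in>S. orthogonal x u" and "\<forall>x\<in>S. orthogonal x w" and "u \<noteq> 0"
  shows "\<exists>c. w = c *\<^sub>R u"
proof -
  define C where "C = {y. \<forall>x \<in> span S. orthogonal x y}"
  have "dim C + dim (span S) = DIM('a)"
    unfolding C_def using dim_subspace_orthogonal_to_vectors[of "span S" UNIV] by simp
  with assms(1,2) have dim_C: "dim C = 1"
    by (simp add: dim_eq_card_independent)
  have "u \<in> C" "w \<in> C"
    unfolding C_def using assms(3,4) orthogonal_to_span orthogonal_commute by blast+
  show ?thesis
  proof (rule ccontr)
    assume "\<nexists>c. w = c *\<^sub>R u"
    then have "w \<notin> span {u}" by (auto simp: span_singleton)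
    with \<open>u \<noteq> 0\<close> have "independent {w, u}" and "w \<noteq> u"
      by (auto simp: independent_insert span_base)
    with \<open>u \<in> C\<close> \<open>w \<in> C\<close> have "card {w, u} \<le> dim C"
      by (intro independent_card_le_dim) auto
    with dim_C \<open>w \<noteq> u\<close> show False by simp
  qed
qed

lemma fits_iff_orthogonal: "fits \<alpha> lam x \<longleftrightarrow> orthogonal x (\<alpha>, -1, -lam)"
  by (cases x) (auto simp: fits_def orthogonal_def tV_def tL_def tq_def inner_commute algebra_simps)

lemma fits_unique:
  fixes S :: "('k::finite) tuple set"
  assumes "independent S" and "card S = CARD('k) + 1"
    and "\<forall>x\<in>S. fits \<alpha> lam x" and "\<forall>x\<in>S. fits \<alpha>' lam' x"
  shows "\<alpha>' = \<alpha> \<and> lam' = lam"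
proof -
  have dim: "card S + 1 = DIM('k tuple)"
    using assms(2) by simp
  have nonzero: "(\<alpha>, -1, -lam) \<noteq> (0 :: 'k tuple)"
    by (simp add: zero_prod_def)
  have "\<forall>x\<in>S. orthogonal x (\<alpha>, -1, -lam)" "\<forall>x\<in>S. orthogonal x (\<alpha>', -1, -lam')"
    using assms(3,4) by (simp_all add: fits_iff_orthogonal)
  from orthogonal_complement_collinear[OF assms(1) dim this nonzero]
  obtain c where c: "(\<alpha>', -1, -lam') = c *\<^sub>R ((\<alpha>, -1, -lam) :: 'k tuple)" by blast
  then have "c = 1" by simp
  with c show ?thesis by simp
qed

lemma lp_optimal_exact_fit:
  assumes "sorted (map tV ts)" and "ts \<noteq> []" and "\<alpha> \<ge> 0"
    and fit: "\<forall>i < length ts. fits \<alpha> lam (ts ! i)"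
  shows "lp_optimal ts 0 \<alpha> lam (\<lambda>_. 0) (\<lambda>i. \<alpha> * tV (ts ! i))"
proof -
  have "\<alpha> * tV (ts ! 0) \<le> \<alpha> * tV (ts ! i)" if "i < length ts" for i
    using assms(1-3) that by (auto simp: sorted_iff_nth_mono mult_left_mono)
  then have "lp_feasible ts 0 \<alpha> lam (\<lambda>_. 0) (\<lambda>i. \<alpha> * tV (ts ! i))"
    using assms(3) fit by (simp add: lp_feasible_def fits_def)
  then show ?thesis
    by (auto simp: lp_optimal_def lp_feasible_def intro!: sum_nonneg)
qed

lemma lp_optimal_fits:
  assumes exact: "lp_feasible ts i \<alpha> lam (\<lambda>_. 0) f"
    and opt: "lp_optimal ts i \<alpha>' lam' \<Delta>' f'"
  shows "\<forall>j < length ts. fits \<alpha>' lam' (ts ! j)"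
proof -
  have feasible: "lp_feasible ts i \<alpha>' lam' \<Delta>' f'"
    using opt by (simp add: lp_optimal_def)
  then have nonneg: "\<forall>j\<in>{..<length ts}. 0 \<le> \<Delta>' j"
    by (simp add: lp_feasible_def)
  have "(\<Sum>j<length ts. \<Delta>' j) \<le> (\<Sum>j<length ts. 0)"
    using opt exact unfolding lp_optimal_def by blast
  with nonneg have "\<forall>j\<in>{..<length ts}. \<Delta>' j = 0"
    using sum_nonneg[of "{..<length ts}" \<Delta>'] sum_nonneg_eq_0_iff[of "{..<length ts}" \<Delta>']
    by simp
  with feasible show ?thesis
    by (auto simp: lp_feasible_def fits_def)
qed

lemma learnlinreg_run_returns_exact_fit:
  fixes ts :: "('k::finite) tuple list"
  assumes "sorted (map tV ts)" and "distinct ts" and "length ts = CARD('k) + 1"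
    and "independent (set ts)" and "\<alpha> \<ge> 0" and fit: "\<forall>x\<in>set ts. fits \<alpha> lam x"
  shows "learnlinreg_run_returns ts \<alpha> lam"
proof -
  have "ts \<noteq> []" and card_ts: "card (set ts) = CARD('k) + 1"
    using assms(2,3) by (auto simp: distinct_card)
  with assms(1,5) fit have opt: "lp_optimal ts 0 \<alpha> lam (\<lambda>_. 0) (\<lambda>i. \<alpha> * tV (ts ! i))"
    by (simp add: lp_optimal_exact_fit)
  have uniqueness: "\<alpha>' = \<alpha> \<and> lam' = lam" if "lp_optimal ts 0 \<alpha>' lam' \<Delta>' f'" for \<alpha>' lam' \<Delta>' f'
  proof -
    have "\<forall>j < length ts. fits \<alpha>' lam' (ts ! j)"
      using lp_optimal_fits[OF opt[unfolded lp_optimal_def, THEN conjunct1] that] .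
    then have "\<forall>x\<in>set ts. fits \<alpha>' lam' x"
      by (metis in_set_conv_nth)
    then show ?thesis
      using fits_unique[OF assms(4) card_ts fit] by blast
  qed
  show ?thesis
    unfolding learnlinreg_run_returns_def
  proof (intro exI[of _ 0] conjI)
    show "0 < length ts" using \<open>ts \<noteq> []\<close> by simp
    show "lp_is_feasible ts 0"
      using opt unfolding lp_is_feasible_def lp_optimal_def by blast
    show "\<forall>j < 0. \<not> lp_is_feasible ts j" by simp
    show "\<exists>\<Delta> f. lp_optimal ts 0 \<alpha> lam \<Delta> f" using opt by blast
    show "\<forall>\<alpha>' lam' \<Delta>' f'. lp_optimal ts 0 \<alpha>' lam' \<Delta>' f' \<longrightarrow> \<alpha>' = \<alpha> \<and> lam' = lam"
      using uniqueness by blast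
  qed
qed

theorem theorem1:
  fixes \<Theta> :: "'a set"
    and q :: "'a \<Rightarrow> real ^ 'k"
    and Lhat V :: "'a \<Rightarrow> real"
    and lams :: "real ^ 'k"
    and \<alpha>s :: real
    and \<theta> :: "nat \<Rightarrow> 'a"
  assumes alpha_pos: "\<alpha>s > 0"
    and lin: "\<forall>x\<in>\<Theta>. \<alpha>s * V x = Lhat x + lams \<bullet> q x"
    and mem: "\<forall>i\<in>{1..CARD('k)+1}. \<theta> i \<in> \<Theta>"
    and indep_inj: "inj_on (\<lambda>i. (V (\<theta> i), Lhat (\<theta> i), q (\<theta> i))) {1..CARD('k)+1}"
    and indep: "independent ((\<lambda>i. (V (\<theta> i), Lhat (\<theta> i), q (\<theta> i))) ` {1..CARD('k)+1})"
  shows "LearnLinReg_returns ((\<lambda>i. (V (\<theta> i), Lhat (\<theta> i), q (\<theta> i))) ` {1..CARD('k)+1}) \<alpha>s lams"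
  unfolding LearnLinReg_returns_def
proof (intro allI impI)
  define D where "D = (\<lambda>i. (V (\<theta> i), Lhat (\<theta> i), q (\<theta> i))) ` {1..CARD('k)+1}"
  fix ts :: "'k tuple list"
  assume "sorted_reindexing D ts"
  then have set_ts: "set ts = D" and "distinct ts" and "sorted (map tV ts)"
    by (simp_all add: sorted_reindexing_def)
  have "card D = CARD('k) + 1"
    unfolding D_def using card_image[OF indep_inj] by simp
  then have "length ts = CARD('k) + 1"
    using set_ts distinct_card[OF \<open>distinct ts\<close>] by simp
  moreover have "\<forall>x\<in>D. fits \<alpha>s lams x"
    unfolding D_def using lin mem by (auto simp: fits_def tV_def tL_def tq_def)
  ultimately show "learnlinreg_run_returns ts \<alpha>s lams"
    using learnlinreg_run_returns_exact_fit[OF \<open>sorted (map tV ts)\<close> \<open>distinct ts\<close>]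
      indep[folded D_def] alpha_pos set_ts by simp
qed

end
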